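(* Let $d\ge3$, $\alpha<2$ and $q>\frac{d-\alpha}{d-2}$. Then there exists a positive function $u$ on $\mathbb Z^d$ satisfying $\Delta u(x)+(1+|x|)^{-\alpha}u(x)^q\le0$ for all $x\in\mathbb Z^d$.
   Context: $\mathbb Z^d$ is the lattice graph with $\mu_{xy}=1$ if $\|x-y\|_1=1$ and $\mu_{xy}=0$ otherwise, so $\mu(x)=2d$ and $\Delta u(x)=\frac1{2d}\sum_{y:\|y-x\|_1=1}(u(y)-u(x))$. $|x|$ is the Euclidean norm. *)

theory Defs
  imports "HOL-Analysis.Analysis"
begin

text \<open>The lattice Z^d is represented by int ^ 'd for a finite index type 'd, d = CARD('d).\<close>

definition l1dist :: "int ^ 'd \<Rightarrow> int ^ 'd \<Rightarrow> int" where
  "l1dist x y = (\<Sum>i\<in>UNIV. \<bar>x $ i - y $ i\<bar>)"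

definition lattice_nbrs :: "int ^ 'd \<Rightarrow> (int ^ 'd) set" where
  "lattice_nbrs x = {y. l1dist x y = 1}"

text \<open>Normalized graph Laplacian on Z^d: mu(x) = 2d.\<close>
definition lattice_laplacian :: "(int ^ 'd \<Rightarrow> real) \<Rightarrow> int ^ 'd \<Rightarrow> real" where
  "lattice_laplacian u x =
     (1 / (2 * real CARD('d))) * (\<Sum>y\<in>lattice_nbrs x. u y - u x)"

definition lattice_norm :: "int ^ 'd \<Rightarrow> real" where
  "lattice_norm x = sqrt (\<Sum>i\<in>UNIV. (real_of_int (x $ i))\<^sup>2)"

end

theory Submission
  imports Defs "HOL-Real_Asymp.Real_Asymp"
begin

text \<open>The supersolution is \<open>u = \<epsilon> (C + |x|\<^sup>2)\<^sup>-\<^sup>\<gamma>\<close> with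
\<open>(2 - \<alpha>) / (2 (q - 1)) \<le> \<gamma> < (d - 2) / 2\<close>, an interval that is nonempty precisely because
\<open>q > (d - \<alpha>) / (d - 2)\<close>. Comparing the second differences of \<open>s \<mapsto> s\<^sup>-\<^sup>\<gamma>\<close> with its second
derivative \<open>\<gamma> (\<gamma> + 1) s\<^sup>-\<^sup>\<gamma>\<^sup>-\<^sup>2\<close> shows that for large \<open>C\<close> the Laplacian of the profile is at most
\<open>-c (C + |x|\<^sup>2 + 1)\<^sup>-\<^sup>\<gamma>\<^sup>-\<^sup>1\<close>, with \<open>c > 0\<close> because \<open>\<gamma> < (d - 2) / 2\<close>. The lower bound on \<open>\<gamma>\<close>
makes \<open>(1 + |x|)\<^sup>-\<^sup>\<alpha> u\<^sup>q\<close> decay at least as fast, and since \<open>q > 1\<close> the nonlinear term is absorbed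
by the Laplacian once \<open>\<epsilon>\<close> is small.\<close>

section \<open>Real power functions\<close>

lemma powr_second_difference_le:
  fixes \<gamma> B :: real
  assumes "\<gamma> * (\<gamma> + 1) < B"
  obtains \<rho> where "\<rho> > 0"
    "\<And>a t. a > 0 \<Longrightarrow> \<bar>t\<bar> < \<rho> * a \<Longrightarrow>
       (a + t) powr (-\<gamma>) + (a - t) powr (-\<gamma>) - 2 * a powr (-\<gamma>) \<le> B * t\<^sup>2 * a powr (-\<gamma> - 2)"
proof -
  have "((\<lambda>r. ((1 + r) powr (-\<gamma>) + (1 - r) powr (-\<gamma>) - 2) / r\<^sup>2) \<longlongrightarrow> \<gamma> * (\<gamma> + 1)) (at 0)"
    by (real_asymp simp add: algebra_simps)
  from order_tendstoD(2)[OF this assms]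
  obtain \<rho>\<^sub>0 where "\<rho>\<^sub>0 > 0" and \<rho>\<^sub>0: "\<And>r. r \<noteq> 0 \<Longrightarrow> \<bar>r\<bar> < \<rho>\<^sub>0 \<Longrightarrow>
      ((1 + r) powr (-\<gamma>) + (1 - r) powr (-\<gamma>) - 2) / r\<^sup>2 < B"
    unfolding eventually_at by auto
  show thesis
  proof
    show "min \<rho>\<^sub>0 1 > 0" using \<open>\<rho>\<^sub>0 > 0\<close> by simp
  next
    fix a t :: real
    assume "a > 0" and t: "\<bar>t\<bar> < min \<rho>\<^sub>0 1 * a"
    define r where "r = t / a"
    have "min \<rho>\<^sub>0 1 * a \<le> \<rho>\<^sub>0 * a" "min \<rho>\<^sub>0 1 * a \<le> 1 * a"
      using \<open>a > 0\<close> by (intro mult_right_mono; simp)+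
    then have "\<bar>t\<bar> < \<rho>\<^sub>0 * a" "\<bar>t\<bar> < 1 * a" using t by linarith+
    then have r: "\<bar>r\<bar> < \<rho>\<^sub>0" "\<bar>r\<bar> < 1"
      using \<open>a > 0\<close> by (simp_all add: r_def abs_divide pos_divide_less_eq)
    have "a + t = a * (1 + r)" "a - t = a * (1 - r)"
      using \<open>a > 0\<close> by (simp_all add: r_def field_simps)
    moreover have "1 + r > 0" "1 - r > 0" using r(2) by auto
    ultimately have "(a + t) powr (-\<gamma>) + (a - t) powr (-\<gamma>) - 2 * a powr (-\<gamma>)
        = a powr (-\<gamma>) * ((1 + r) powr (-\<gamma>) + (1 - r) powr (-\<gamma>) - 2)"
      using \<open>a > 0\<close> by (simp only: powr_mult less_imp_le) (simp add: algebra_simps)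
    also have "\<dots> \<le> a powr (-\<gamma>) * (B * r\<^sup>2)"
      using \<rho>\<^sub>0[OF _ r(1)] by (intro mult_left_mono) (cases "r = 0", auto simp: divide_less_eq)
    also have "\<dots> = B * t\<^sup>2 * a powr (-\<gamma> - 2)"
      using \<open>a > 0\<close> by (simp add: r_def power_divide powr_diff powr_realpow)
    finally show "(a + t) powr (-\<gamma>) + (a - t) powr (-\<gamma>) - 2 * a powr (-\<gamma>) \<le> B * t\<^sup>2 * a powr (-\<gamma> - 2)" .
  qed
qed

lemma powr_tangent_le:
  fixes a \<gamma> :: real
  assumes "a > 1" and "\<gamma> \<ge> 0"
  shows "a powr (-\<gamma>) + \<gamma> * a powr (-\<gamma> - 1) \<le> (a - 1) powr (-\<gamma>)"
proof -
  define s where "s = 1 / a"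
  have s: "0 < s" "s < 1" using assms(1) by (auto simp: s_def)
  have "\<gamma> * s \<le> \<gamma> * - ln (1 - s)"
    using ln_le_minus_one[of "1 - s"] s assms(2) by (intro mult_left_mono) auto
  then have "1 + \<gamma> * s \<le> exp (-\<gamma> * ln (1 - s))"
    using exp_ge_add_one_self[of "-\<gamma> * ln (1 - s)"] by simp
  also have "\<dots> = (1 - s) powr (-\<gamma>)" using s by (simp add: powr_def)
  finally have "a powr (-\<gamma>) * (1 + \<gamma> * s) \<le> a powr (-\<gamma>) * (1 - s) powr (-\<gamma>)"
    by (rule mult_left_mono) simp
  moreover have "a powr (-\<gamma>) * (1 + \<gamma> * s) = a powr (-\<gamma>) + \<gamma> * a powr (-\<gamma> - 1)"
    using assms(1) by (simp add: s_def powr_diff distrib_left)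
  moreover have "a powr (-\<gamma>) * (1 - s) powr (-\<gamma>) = (a - 1) powr (-\<gamma>)"
  proof -
    have "a * (1 - s) = a - 1" using assms(1) by (simp add: s_def field_simps)
    then show ?thesis using assms(1) s by (simp flip: powr_mult)
  qed
  ultimately show ?thesis by simp
qed

lemma gt_one_of_gt_critical_exponent:
  fixes d \<alpha> q :: real
  assumes "d > 2" and "\<alpha> < 2" and "q > (d - \<alpha>) / (d - 2)"
  shows "q > 1"
proof -
  have "1 < (d - \<alpha>) / (d - 2)" using assms(1,2) by simp
  then show ?thesis using assms(3) by linarith
qed

lemma profile_exponent_exists:
  fixes d \<alpha> q :: real
  assumes "d > 2" and "\<alpha> < 2" and "q > (d - \<alpha>) / (d - 2)"
  obtains \<gamma> where "\<gamma> > 0" "2 * \<gamma> + 2 < d" "1 - \<alpha> / 2 \<le> \<gamma> * (q - 1)"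
proof -
  have "q * (d - 2) > d - \<alpha>" using assms(1,3) by (simp add: pos_divide_less_eq)
  then have gap: "(q - 1) * (d - 2) > 2 - \<alpha>" by (simp add: algebra_simps)
  have "q > 1" using gt_one_of_gt_critical_exponent[OF assms] .
  define L where "L = (2 - \<alpha>) / (2 * (q - 1))"
  have "L > 0" and "L < (d - 2) / 2" and "L * (q - 1) = 1 - \<alpha> / 2"
    using gap \<open>q > 1\<close> assms(2) by (auto simp: L_def field_simps)
  define \<gamma> where "\<gamma> = (L + (d - 2) / 2) / 2"
  have "L < \<gamma>" "\<gamma> < (d - 2) / 2"
    using \<open>L < (d - 2) / 2\<close> by (simp_all add: \<gamma>_def field_simps)
  then have "L * (q - 1) \<le> \<gamma> * (q - 1)"
    using \<open>q > 1\<close> by (intro mult_right_mono) auto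
  show thesis
  proof (rule that)
    show "\<gamma> > 0" using \<open>L > 0\<close> \<open>L < \<gamma>\<close> by linarith
    show "2 * \<gamma> + 2 < d" using \<open>\<gamma> < (d - 2) / 2\<close> by (simp add: field_simps)
    show "1 - \<alpha> / 2 \<le> \<gamma> * (q - 1)"
      using \<open>L * (q - 1) \<le> \<gamma> * (q - 1)\<close> \<open>L * (q - 1) = 1 - \<alpha> / 2\<close> by linarith
  qed
qed

lemma one_plus_powr_le_square_powr:
  fixes \<alpha> C :: real
  assumes "C \<ge> 0"
  obtains K where "K > 0"
    "\<And>n. n \<ge> 0 \<Longrightarrow> (1 + n) powr (-\<alpha>) \<le> K * (C + n\<^sup>2 + 1) powr (-\<alpha> / 2)"
proof
  show "(C + 1) powr (\<alpha> / 2) + 2 powr (-\<alpha> / 2) > 0"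
    using assms by (simp add: add_pos_pos)
next
  fix n :: real
  assume "n \<ge> 0"
  define A where "A = C + n\<^sup>2 + 1"
  have "A > 0" using assms by (simp add: A_def add_nonneg_pos)
  have "(1 + n) powr (-\<alpha>) = ((1 + n) powr 2) powr (-\<alpha> / 2)"
    by (simp add: powr_powr)
  also have "\<dots> = ((1 + n)\<^sup>2) powr (-\<alpha> / 2)"
    using \<open>n \<ge> 0\<close> by simp
  also have "\<dots> \<le> ((C + 1) powr (\<alpha> / 2) + 2 powr (-\<alpha> / 2)) * A powr (-\<alpha> / 2)"
  proof (cases "\<alpha> \<ge> 0")
    case True
    have "A \<le> (C + 1) * (1 + n)\<^sup>2"
      using assms \<open>n \<ge> 0\<close> by (simp add: A_def power2_eq_square algebra_simps)
    then have "((1 + n)\<^sup>2) powr (-\<alpha> / 2) \<le> (A / (C + 1)) powr (-\<alpha> / 2)"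
      using True assms \<open>A > 0\<close> by (intro powr_mono2') (auto simp: divide_le_eq mult.commute)
    also have "\<dots> = (C + 1) powr (\<alpha> / 2) * A powr (-\<alpha> / 2)"
      using assms by (simp add: powr_divide powr_minus divide_simps)
    finally show ?thesis by (simp add: distrib_right add_increasing2)
  next
    case False
    have "(1 + n)\<^sup>2 \<le> 2 * A"
      using assms zero_le_power2[of "1 - n"] unfolding A_def power2_eq_square by (simp add: algebra_simps)
    then have "((1 + n)\<^sup>2) powr (-\<alpha> / 2) \<le> (2 * A) powr (-\<alpha> / 2)"
      using False by (intro powr_mono2) auto
    also have "\<dots> = 2 powr (-\<alpha> / 2) * A powr (-\<alpha> / 2)"
      using \<open>A > 0\<close> by (simp add: powr_mult)
    finally show ?thesis by (simp add: distrib_right add_increasing)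
  qed
  finally show "(1 + n) powr (-\<alpha>) \<le> ((C + 1) powr (\<alpha> / 2) + 2 powr (-\<alpha> / 2)) * (C + n\<^sup>2 + 1) powr (-\<alpha> / 2)"
    by (simp add: A_def)
qed

lemma weighted_profile_powr_le:
  fixes \<alpha> \<gamma> q C :: real
  assumes "C \<ge> 1" and "\<gamma> \<ge> 0" and "q \<ge> 0" and "1 - \<alpha> / 2 \<le> \<gamma> * (q - 1)"
  obtains D where "D > 0"
    "\<And>n. n \<ge> 0 \<Longrightarrow>
       (1 + n) powr (-\<alpha>) * ((C + n\<^sup>2) powr (-\<gamma>)) powr q \<le> D * (C + n\<^sup>2 + 1) powr (-\<gamma> - 1)"
proof -
  obtain K where "K > 0" and K: "\<And>n. n \<ge> 0 \<Longrightarrow> (1 + n) powr (-\<alpha>) \<le> K * (C + n\<^sup>2 + 1) powr (-\<alpha> / 2)"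
    using one_plus_powr_le_square_powr[of C \<alpha>] assms(1) by auto
  show thesis
  proof
    show "K * 2 powr (\<gamma> * q) > 0" using \<open>K > 0\<close> by simp
  next
    fix n :: real
    assume "n \<ge> 0"
    define a where "a = C + n\<^sup>2 + 1"
    have "a \<ge> 2" using assms(1) zero_le_power2[of n] unfolding a_def by linarith
    have "((C + n\<^sup>2) powr (-\<gamma>)) powr q = (a - 1) powr (-\<gamma> * q)"
      by (simp add: a_def powr_powr)
    also have "\<dots> \<le> (a / 2) powr (-\<gamma> * q)"
      using \<open>a \<ge> 2\<close> assms(2,3) by (intro powr_mono2') auto
    also have "\<dots> = 2 powr (\<gamma> * q) * a powr (-\<gamma> * q)"
      using \<open>a \<ge> 2\<close> by (simp add: powr_divide powr_minus divide_simps)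
    finally have "(1 + n) powr (-\<alpha>) * ((C + n\<^sup>2) powr (-\<gamma>)) powr q
        \<le> K * a powr (-\<alpha> / 2) * (2 powr (\<gamma> * q) * a powr (-\<gamma> * q))"
      using K[OF \<open>n \<ge> 0\<close>] \<open>K > 0\<close> by (intro mult_mono) (auto simp: a_def)
    also have "\<dots> = K * 2 powr (\<gamma> * q) * a powr (-\<alpha> / 2 + -\<gamma> * q)"
      by (simp only: powr_add ac_simps)
    also have "\<dots> \<le> K * 2 powr (\<gamma> * q) * a powr (-\<gamma> - 1)"
      using \<open>a \<ge> 2\<close> \<open>K > 0\<close> assms(4) by (intro mult_left_mono powr_mono) (auto simp: algebra_simps)
    finally show "(1 + n) powr (-\<alpha>) * ((C + n\<^sup>2) powr (-\<gamma>)) powr q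
        \<le> K * 2 powr (\<gamma> * q) * (C + n\<^sup>2 + 1) powr (-\<gamma> - 1)"
      by (simp add: a_def)
  qed
qed

section \<open>The lattice Laplacian\<close>

lemma lattice_nbrs_eq:
  fixes x :: "int ^ 'd::finite"
  shows "lattice_nbrs x = range (\<lambda>i. x + axis i 1) \<union> range (\<lambda>i. x - axis i 1)"
proof (intro set_eqI iffI)
  fix y
  assume "y \<in> lattice_nbrs x"
  then have sum1: "(\<Sum>j\<in>UNIV. \<bar>x $ j - y $ j\<bar>) = 1"
    by (simp add: lattice_nbrs_def l1dist_def)
  then obtain i where "x $ i \<noteq> y $ i"
    by (metis (no_types, lifting) abs_zero diff_self sum.neutral zero_neq_one)
  have "(\<Sum>j\<in>UNIV. \<bar>x $ j - y $ j\<bar>) = \<bar>x $ i - y $ i\<bar> + (\<Sum>j\<in>UNIV - {i}. \<bar>x $ j - y $ j\<bar>)"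
    by (simp add: sum.remove)
  moreover have "(\<Sum>j\<in>UNIV - {i}. \<bar>x $ j - y $ j\<bar>) \<ge> 0" by (simp add: sum_nonneg)
  ultimately have "\<bar>x $ i - y $ i\<bar> = 1" and "(\<Sum>j\<in>UNIV - {i}. \<bar>x $ j - y $ j\<bar>) = 0"
    using sum1 \<open>x $ i \<noteq> y $ i\<close> by linarith+
  then have "y $ i = x $ i + 1 \<or> y $ i = x $ i - 1" and "\<forall>j. j \<noteq> i \<longrightarrow> y $ j = x $ j"
    by (auto simp: sum_nonneg_eq_0_iff)
  then have "y = x + axis i 1 \<or> y = x - axis i 1"
    by (auto simp: vec_eq_iff axis_def)
  then show "y \<in> range (\<lambda>i. x + axis i 1) \<union> range (\<lambda>i. x - axis i 1)" by blast
next
  fix y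
  assume "y \<in> range (\<lambda>i. x + axis i 1) \<union> range (\<lambda>i. x - axis i 1)"
  then obtain i where "y = x + axis i 1 \<or> y = x - axis i 1" by blast
  then have "\<And>j. \<bar>x $ j - y $ j\<bar> = (if j = i then 1 else 0)" by (auto simp: axis_def)
  then show "y \<in> lattice_nbrs x" by (simp add: lattice_nbrs_def l1dist_def)
qed

lemma sum_lattice_nbrs:
  fixes x :: "int ^ 'd::finite" and F :: "int ^ 'd \<Rightarrow> 'a::comm_monoid_add"
  shows "(\<Sum>y\<in>lattice_nbrs x. F y) = (\<Sum>i\<in>UNIV. F (x + axis i 1) + F (x - axis i 1))"
proof -
  have "inj (\<lambda>i. x + axis i 1)" and "inj (\<lambda>i. x - axis i 1)"
    by (auto intro: injI simp: axis_eq_axis)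
  moreover have "range (\<lambda>i. x + axis i 1) \<inter> range (\<lambda>i. x - axis i 1) = {}"
    by (auto simp: vec_eq_iff axis_def split: if_splits)
  ultimately show ?thesis
    by (simp add: lattice_nbrs_eq sum.union_disjoint sum.reindex sum.distrib)
qed

lemma lattice_laplacian_eq_sum_axis:
  fixes u :: "int ^ 'd::finite \<Rightarrow> real"
  shows "lattice_laplacian u x
    = (\<Sum>i\<in>UNIV. u (x + axis i 1) + u (x - axis i 1) - 2 * u x) / (2 * CARD('d))"
  by (simp add: lattice_laplacian_def sum_lattice_nbrs algebra_simps)

lemma lattice_laplacian_cmult:
  "lattice_laplacian (\<lambda>y. c * u y) x = c * lattice_laplacian u x"
  unfolding lattice_laplacian_def right_diff_distrib[symmetric] sum_distrib_left[symmetric]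
  by (simp add: ac_simps)

lemma lattice_norm_nonneg: "lattice_norm x \<ge> 0"
  by (simp add: lattice_norm_def sum_nonneg)

lemma lattice_norm_sq: "lattice_norm x ^ 2 = (\<Sum>i\<in>UNIV. real_of_int (x $ i) ^ 2)"
  by (simp add: lattice_norm_def sum_nonneg)

lemma lattice_norm_sq_add_axis:
  fixes s :: int
  shows "lattice_norm (x + axis i s) ^ 2 = lattice_norm x ^ 2 + real_of_int (2 * s * x $ i + s ^ 2)"
proof -
  have "lattice_norm (x + axis i s) ^ 2
      = (\<Sum>j\<in>UNIV. real_of_int (x $ j) ^ 2 + (if j = i then 2 * real_of_int s * x $ i + real_of_int s ^ 2 else 0))"
    unfolding lattice_norm_sq by (intro sum.cong) (auto simp: axis_def power2_eq_square algebra_simps)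
  then show ?thesis by (simp add: sum.distrib lattice_norm_sq)
qed

lemma lattice_norm_sq_diff_axis:
  "lattice_norm (x - axis i 1) ^ 2 = lattice_norm x ^ 2 - 2 * real_of_int (x $ i) + 1"
proof -
  have "x - axis i 1 = x + axis i (-1)" by (simp add: vec_eq_iff axis_def)
  then show ?thesis using lattice_norm_sq_add_axis[of x i "-1"] by (simp only:) simp
qed

lemma abs_component_le_lattice_norm: "\<bar>real_of_int (x $ i)\<bar> \<le> lattice_norm x"
  unfolding lattice_norm_def
  by (rule real_le_rsqrt) (simp add: member_le_sum[of i UNIV "\<lambda>j. real_of_int (x $ j) ^ 2"])

section \<open>The power-law supersolution\<close>

lemma double_lt_mult_add_square:
  fixes \<rho> C n :: real
  assumes "\<rho> > 0" and "1 \<le> \<rho>\<^sup>2 * C"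
  shows "2 * n < \<rho> * (C + n\<^sup>2 + 1)"
proof -
  have "2 * \<rho> * n \<le> \<rho>\<^sup>2 * n\<^sup>2 + 1"
    using zero_le_power2[of "\<rho> * n - 1"] by (simp add: power2_eq_square algebra_simps)
  also have "\<dots> < \<rho>\<^sup>2 * n\<^sup>2 + \<rho>\<^sup>2 * C + \<rho>\<^sup>2"
    using assms(2) zero_less_power[OF \<open>\<rho> > 0\<close>, of 2] by linarith
  also have "\<dots> = \<rho> * (\<rho> * (C + n\<^sup>2 + 1))"
    by (simp add: power2_eq_square algebra_simps)
  finally show ?thesis using \<open>\<rho> > 0\<close> by simp
qed

lemma lattice_laplacian_profile_le_of_second_difference:
  fixes \<gamma> B \<rho> C :: real and x :: "int ^ 'd::finite"
  assumes "\<gamma> \<ge> 0" and "B \<ge> 0" and "\<rho> > 0" and "C \<ge> 1" and "1 \<le> \<rho>\<^sup>2 * C"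
    and second_difference: "\<And>a t. a > 0 \<Longrightarrow> \<bar>t\<bar> < \<rho> * a \<Longrightarrow>
       (a + t) powr (-\<gamma>) + (a - t) powr (-\<gamma>) - 2 * a powr (-\<gamma>) \<le> B * t\<^sup>2 * a powr (-\<gamma> - 2)"
  shows "lattice_laplacian (\<lambda>y. (C + lattice_norm y ^ 2) powr (-\<gamma>)) x
    \<le> - ((CARD('d) * \<gamma> - 2 * B) / CARD('d)) * (C + lattice_norm x ^ 2 + 1) powr (-\<gamma> - 1)"
proof -
  define d where "d = real CARD('d)"
  define h where "h = (\<lambda>y :: int ^ 'd. (C + lattice_norm y ^ 2) powr (-\<gamma>))"
  define n where "n = lattice_norm x"
  define a where "a = C + n\<^sup>2 + 1"
  have "d > 0" by (simp add: d_def)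
  have "a > 1" "n\<^sup>2 \<le> a" using \<open>C \<ge> 1\<close> by (simp_all add: a_def add_pos_nonneg)
  \<comment> \<open>The centre value is \<open>h x = (a - 1)\<^sup>-\<^sup>\<gamma>\<close>, not \<open>a\<^sup>-\<^sup>\<gamma>\<close>: by the tangent bound this shift is
    what produces the negative term.\<close>
  have step: "h (x + axis i 1) + h (x - axis i 1) - 2 * h x
      \<le> B * (2 * x $ i)\<^sup>2 * a powr (-\<gamma> - 2) - 2 * \<gamma> * a powr (-\<gamma> - 1)" for i
  proof -
    define t where "t = 2 * real_of_int (x $ i)"
    have "\<bar>t\<bar> < \<rho> * a"
      using abs_component_le_lattice_norm[of x i] double_lt_mult_add_square[OF assms(3,5), of n]
      by (simp add: t_def n_def a_def)
    moreover have "h (x + axis i 1) = (a + t) powr (-\<gamma>)" "h (x - axis i 1) = (a - t) powr (-\<gamma>)"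
      "h x = (a - 1) powr (-\<gamma>)"
      by (simp_all add: h_def a_def t_def n_def lattice_norm_sq_add_axis lattice_norm_sq_diff_axis algebra_simps)
    ultimately show ?thesis
      using second_difference[of a t] powr_tangent_le[of a \<gamma>] \<open>a > 1\<close> \<open>\<gamma> \<ge> 0\<close>
      by (simp add: t_def)
  qed
  have "lattice_laplacian h x = (\<Sum>i\<in>UNIV. h (x + axis i 1) + h (x - axis i 1) - 2 * h x) / (2 * d)"
    by (simp add: lattice_laplacian_eq_sum_axis d_def)
  also have "\<dots> \<le> (\<Sum>i\<in>UNIV. B * (2 * x $ i)\<^sup>2 * a powr (-\<gamma> - 2) - 2 * \<gamma> * a powr (-\<gamma> - 1)) / (2 * d)"
    using \<open>d > 0\<close> by (intro divide_right_mono sum_mono step) simp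
  also have "\<dots> = (4 * B * (n\<^sup>2 * a powr (-\<gamma> - 2)) - 2 * d * \<gamma> * a powr (-\<gamma> - 1)) / (2 * d)"
    by (simp add: sum_subtractf sum_distrib_right[symmetric] sum_distrib_left[symmetric] n_def
        lattice_norm_sq d_def power_mult_distrib algebra_simps)
  also have "\<dots> \<le> (4 * B * a powr (-\<gamma> - 1) - 2 * d * \<gamma> * a powr (-\<gamma> - 1)) / (2 * d)"
  proof -
    have "n\<^sup>2 * a powr (-\<gamma> - 2) \<le> a * a powr (-\<gamma> - 2)"
      using \<open>n\<^sup>2 \<le> a\<close> by (intro mult_right_mono) auto
    also have "\<dots> = a powr (-\<gamma> - 1)"
      using \<open>a > 1\<close> by (simp add: powr_diff powr_minus_divide power2_eq_square field_simps)
    finally show ?thesis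
      using \<open>d > 0\<close> \<open>B \<ge> 0\<close> by (intro divide_right_mono diff_right_mono mult_left_mono) auto
  qed
  also have "\<dots> = - ((d * \<gamma> - 2 * B) / d) * a powr (-\<gamma> - 1)"
    using \<open>d > 0\<close> by (simp add: field_simps)
  finally show ?thesis by (simp add: h_def a_def n_def d_def)
qed

lemma lattice_laplacian_profile_le:
  fixes \<gamma> :: real
  assumes "\<gamma> > 0" and "2 * \<gamma> + 2 < CARD('d::finite)"
  obtains C c where "C \<ge> 1" "c > 0"
    "\<And>x :: int ^ 'd. lattice_laplacian (\<lambda>y. (C + lattice_norm y ^ 2) powr (-\<gamma>)) x
        \<le> - c * (C + lattice_norm x ^ 2 + 1) powr (-\<gamma> - 1)"
proof -
  define d where "d = real CARD('d)"
  \<comment> \<open>\<open>B\<close> must exceed the curvature \<open>\<gamma>(\<gamma> + 1)\<close> of \<open>s\<^sup>-\<^sup>\<gamma>\<close> but stay below \<open>d\<gamma>/2\<close> for the constant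
    of the pointwise bound to be negative; there is room exactly because \<open>2\<gamma> + 2 < d\<close>.\<close>
  define B where "B = (\<gamma> * (\<gamma> + 1) + d * \<gamma> / 2) / 2"
  have "(2 * \<gamma> + 2) * \<gamma> < d * \<gamma>"
    using assms by (intro mult_strict_right_mono) (simp_all add: d_def)
  then have "\<gamma> * (\<gamma> + 1) < d * \<gamma> / 2" by (simp add: algebra_simps)
  then have "\<gamma> * (\<gamma> + 1) < B" and "B < d * \<gamma> / 2" by (simp_all add: B_def algebra_simps)
  moreover have "0 < \<gamma> * (\<gamma> + 1)" using assms(1) by simp
  ultimately have "B \<ge> 0" by linarith
  obtain \<rho> where "\<rho> > 0" and second_difference:
    "\<And>a t. a > 0 \<Longrightarrow> \<bar>t\<bar> < \<rho> * a \<Longrightarrow>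
       (a + t) powr (-\<gamma>) + (a - t) powr (-\<gamma>) - 2 * a powr (-\<gamma>) \<le> B * t\<^sup>2 * a powr (-\<gamma> - 2)"
    using powr_second_difference_le \<open>\<gamma> * (\<gamma> + 1) < B\<close> by blast
  define C where "C = max 1 (1 / \<rho>\<^sup>2)"
  have "\<rho>\<^sup>2 * (1 / \<rho>\<^sup>2) \<le> \<rho>\<^sup>2 * C" by (intro mult_left_mono) (simp_all add: C_def)
  then have "1 \<le> \<rho>\<^sup>2 * C" using \<open>\<rho> > 0\<close> by simp
  have "C \<ge> 1" by (simp add: C_def)
  have "lattice_laplacian (\<lambda>y. (C + lattice_norm y ^ 2) powr (-\<gamma>)) x
      \<le> - ((d * \<gamma> - 2 * B) / d) * (C + lattice_norm x ^ 2 + 1) powr (-\<gamma> - 1)" for x :: "int ^ 'd"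
    unfolding d_def using less_imp_le[OF assms(1)] \<open>B \<ge> 0\<close> \<open>\<rho> > 0\<close> \<open>C \<ge> 1\<close> \<open>1 \<le> \<rho>\<^sup>2 * C\<close> second_difference
    by (rule lattice_laplacian_profile_le_of_second_difference)
  moreover have "(d * \<gamma> - 2 * B) / d > 0" using \<open>B < d * \<gamma> / 2\<close> assms by (simp add: d_def)
  ultimately show thesis using that \<open>C \<ge> 1\<close> by blast
qed

lemma lattice_supersolution_scaling:
  fixes h g V :: "int ^ 'd::finite \<Rightarrow> real" and q c D :: real
  assumes "q > 1" and "c > 0" and "D > 0"
    and "\<And>x. h x \<ge> 0"
    and "\<And>x. lattice_laplacian h x \<le> - c * g x"
    and "\<And>x. V x * h x powr q \<le> D * g x"
  obtains \<epsilon> where "\<epsilon> > 0"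
    "\<And>x. lattice_laplacian (\<lambda>y. \<epsilon> * h y) x + V x * (\<epsilon> * h x) powr q \<le> 0"
proof -
  define \<epsilon> where "\<epsilon> = (c / D) powr (1 / (q - 1))"
  have "\<epsilon> > 0" using assms(2,3) by (simp add: \<epsilon>_def)
  have "\<epsilon> powr q = \<epsilon> powr 1 * \<epsilon> powr (q - 1)"
    using powr_add[of \<epsilon> 1 "q - 1"] \<open>\<epsilon> > 0\<close> by simp
  also have "\<dots> = \<epsilon> * (c / D)"
    using \<open>\<epsilon> > 0\<close> assms(1-3) by (simp add: \<epsilon>_def powr_powr)
  finally have \<epsilon>_powr: "\<epsilon> powr q = \<epsilon> * (c / D)" .
  show thesis
  proof (rule that)
    show "\<epsilon> > 0" by fact
  next
    fix x
    have "lattice_laplacian (\<lambda>y. \<epsilon> * h y) x + V x * (\<epsilon> * h x) powr q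
        = \<epsilon> * lattice_laplacian h x + \<epsilon> powr q * (V x * h x powr q)"
      using \<open>\<epsilon> > 0\<close> assms(4) by (simp add: lattice_laplacian_cmult powr_mult)
    also have "\<dots> \<le> \<epsilon> * (- c * g x) + \<epsilon> powr q * (D * g x)"
      using \<open>\<epsilon> > 0\<close> assms(5,6) by (intro add_mono mult_left_mono) auto
    also have "\<dots> = 0"
      using assms(3) by (simp add: \<epsilon>_powr)
    finally show "lattice_laplacian (\<lambda>y. \<epsilon> * h y) x + V x * (\<epsilon> * h x) powr q \<le> 0" .
  qed
qed

theorem theorem7p5:
  fixes \<alpha> q :: real
  assumes "CARD('d::finite) \<ge> 3"
    and "\<alpha> < 2"
    and "q > (real CARD('d) - \<alpha>) / (real CARD('d) - 2)"
  shows "\<exists>u :: int ^ 'd \<Rightarrow> real. (\<forall>x. u x > 0) \<and>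
           (\<forall>x. lattice_laplacian u x + (1 + lattice_norm x) powr (- \<alpha>) * (u x) powr q \<le> 0)"
proof -
  obtain \<gamma> where "\<gamma> > 0" and "2 * \<gamma> + 2 < real CARD('d)" and \<gamma>_q: "1 - \<alpha> / 2 \<le> \<gamma> * (q - 1)"
    using profile_exponent_exists[of "real CARD('d)" \<alpha> q] assms by force
  have "q > 1" using gt_one_of_gt_critical_exponent[of "real CARD('d)" \<alpha> q] assms by simp
  obtain C c where "C \<ge> 1" "c > 0" and laplacian:
    "\<And>x :: int ^ 'd. lattice_laplacian (\<lambda>y. (C + lattice_norm y ^ 2) powr (-\<gamma>)) x
        \<le> - c * (C + lattice_norm x ^ 2 + 1) powr (-\<gamma> - 1)"
    using lattice_laplacian_profile_le \<open>\<gamma> > 0\<close> \<open>2 * \<gamma> + 2 < real CARD('d)\<close> by blast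
  obtain D where "D > 0" and decay:
    "\<And>n. n \<ge> 0 \<Longrightarrow> (1 + n) powr (-\<alpha>) * ((C + n\<^sup>2) powr (-\<gamma>)) powr q \<le> D * (C + n\<^sup>2 + 1) powr (-\<gamma> - 1)"
    using weighted_profile_powr_le[of C \<gamma> q \<alpha>] \<open>C \<ge> 1\<close> \<open>\<gamma> > 0\<close> \<open>q > 1\<close> \<gamma>_q by auto
  define h where "h = (\<lambda>y :: int ^ 'd. (C + lattice_norm y ^ 2) powr (-\<gamma>))"
  define g where "g = (\<lambda>y :: int ^ 'd. (C + lattice_norm y ^ 2 + 1) powr (-\<gamma> - 1))"
  have h_pos: "h x > 0" for x
    unfolding h_def using add_pos_nonneg[OF _ zero_le_power2, of C "lattice_norm x"] \<open>C \<ge> 1\<close> by simp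
  then have h_nonneg: "h x \<ge> 0" for x by (simp add: less_imp_le)
  have laplacian_h: "lattice_laplacian h x \<le> - c * g x" for x
    unfolding h_def g_def by (rule laplacian)
  have nonlinearity_h: "(1 + lattice_norm x) powr (-\<alpha>) * h x powr q \<le> D * g x" for x
    unfolding h_def g_def by (rule decay[OF lattice_norm_nonneg])
  obtain \<epsilon> where "\<epsilon> > 0" and supersolution:
    "\<And>x. lattice_laplacian (\<lambda>y. \<epsilon> * h y) x + (1 + lattice_norm x) powr (-\<alpha>) * (\<epsilon> * h x) powr q \<le> 0"
    using lattice_supersolution_scaling[OF \<open>q > 1\<close> \<open>c > 0\<close> \<open>D > 0\<close> h_nonneg laplacian_h nonlinearity_h]
    by blast
  show ?thesis
    using \<open>\<epsilon> > 0\<close> h_pos supersolution by (intro exI[of _ "\<lambda>y. \<epsilon> * h y"]) simp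
qed

end
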